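(* Let $G=K_{s}^{t}$ with $3\leq t+1\leq s$ and $n=s+t$. Then $\lambda_{2}(D(G))=\sqrt{2}-2$.
   Context: $D(G)$ is the distance matrix of $G$, with eigenvalues $\lambda_{1}(D(G))\geq\lambda_{2}(D(G))\geq\cdots$. $K_{s}^{t}$ denotes the graph on $n=s+t$ vertices obtained from the complete graph $K_s$ by attaching a pendant edge (a new vertex of degree 1) to each of $t$ distinct vertices of $K_s$. *)

theory Defs
  imports "Jordan_Normal_Form.Char_Poly" "HOL-Computational_Algebra.Polynomial"
begin

text \<open>The graph K_s^t on vertex set {0..<s+t}: vertices 0..s-1 form the clique K_s;
  for j < t, vertex s+j is a pendant vertex attached to clique vertex j.\<close>
definition Kst_adj :: "nat \<Rightarrow> nat \<Rightarrow> nat \<Rightarrow> nat \<Rightarrow> bool" where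
  "Kst_adj s t u v \<longleftrightarrow> u < s + t \<and> v < s + t \<and> u \<noteq> v \<and>
     ((u < s \<and> v < s) \<or> (u < t \<and> v = u + s) \<or> (v < t \<and> u = v + s))"

definition graph_dist :: "(nat \<Rightarrow> nat \<Rightarrow> bool) \<Rightarrow> nat \<Rightarrow> nat \<Rightarrow> nat" where
  "graph_dist E u v = (LEAST k. (u, v) \<in> {(x, y). E x y} ^^ k)"

definition dist_matrix :: "nat \<Rightarrow> (nat \<Rightarrow> nat \<Rightarrow> bool) \<Rightarrow> real mat" where
  "dist_matrix n E = mat n n (\<lambda>(i, j). real (graph_dist E i j))"

text \<open>Eigenvalues (with multiplicity) of a real matrix whose characteristic polynomial
  splits over the reals (e.g. a symmetric matrix), sorted non-increasingly;
  eigval A i is lambda_i(A) for 1 <= i <= dim.\<close>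
definition eigval :: "real mat \<Rightarrow> nat \<Rightarrow> real" where
  "eigval A i = rev (sorted_list_of_multiset (proots (char_poly A))) ! (i - 1)"

end

theory Submission
  imports Defs
begin

text \<open>Write \<open>s = p + m + 2\<close> and \<open>t = p + 1\<close> with \<open>p \<ge> 1\<close>. Distances in \<open>K\<^sub>s\<^sup>t\<close> are at most 3,
  so \<open>D\<close> is explicit, and an explicit change of basis makes it block upper triangular: for
  each pair of clique vertices with pendants, \<open>D\<close> acts on their difference and the difference
  of their pendants by \<open>[[-1, -1], [-1, -3]]\<close>, which has eigenvalues \<open>-2 \<plusminus> sqrt 2\<close>; the
  differences of clique vertices without pendants are eigenvectors for \<open>-1\<close>; and what remains
  is the \<open>3 \<times> 3\<close> quotient matrix of the partition into clique vertices with pendants, clique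
  vertices without, and pendants. Its characteristic cubic is negative at \<open>sqrt 2 - 2\<close> and
  positive at \<open>-1\<close>, so exactly one eigenvalue of \<open>D\<close> exceeds \<open>sqrt 2 - 2\<close>, while
  \<open>sqrt 2 - 2\<close> itself occurs \<open>p\<close> times.\<close>

section \<open>Distances in \<open>K\<^sub>s\<^sup>t\<close>\<close>

lemma relpow_2_iff: "(u, v) \<in> R ^^ 2 \<longleftrightarrow> (\<exists>w. (u, w) \<in> R \<and> (w, v) \<in> R)"
  by (auto simp: numeral_2_eq_2 relcomp_unfold)

lemma relpow_3_iff: "(u, v) \<in> R ^^ 3 \<longleftrightarrow> (\<exists>w x. (u, w) \<in> R \<and> (w, x) \<in> R \<and> (x, v) \<in> R)"
  by (auto simp: numeral_3_eq_3 relcomp_unfold)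

definition Kst_dist :: "nat \<Rightarrow> nat \<Rightarrow> nat \<Rightarrow> nat \<Rightarrow> nat" where
  "Kst_dist s t u v = (if u = v then 0 else if Kst_adj s t u v then 1
      else if s \<le> u \<and> s \<le> v then 3 else 2)"

lemma Kst_dist_walk:
  assumes "t \<le> s" "u < s + t" "v < s + t"
  shows "(u, v) \<in> {(x, y). Kst_adj s t x y} ^^ Kst_dist s t u v"
proof -
  consider "u = v" | "Kst_adj s t u v"
    | "u \<noteq> v" "\<not> Kst_adj s t u v" "s \<le> u" "s \<le> v"
    | "\<not> Kst_adj s t u v" "u < s" "s \<le> v"
    | "\<not> Kst_adj s t u v" "s \<le> u" "v < s"
    | "u \<noteq> v" "u < s" "v < s"
    by linarith
  then show ?thesis
  proof cases
    case 3
    then have "Kst_adj s t u (u - s)" "Kst_adj s t (u - s) (v - s)" "Kst_adj s t (v - s) v"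
      using assms unfolding Kst_adj_def by auto
    then show ?thesis using 3 by (simp add: Kst_dist_def relpow_3_iff) blast
  next
    case 4
    then have "Kst_adj s t u (v - s)" "Kst_adj s t (v - s) v"
      using assms unfolding Kst_adj_def by auto
    then show ?thesis using 4 by (auto simp: Kst_dist_def relpow_2_iff)
  next
    case 5
    then have "Kst_adj s t u (u - s)" "Kst_adj s t (u - s) v"
      using assms unfolding Kst_adj_def by auto
    then show ?thesis using 5 by (auto simp: Kst_dist_def relpow_2_iff)
  next
    case 6
    then show ?thesis using assms unfolding Kst_dist_def Kst_adj_def by auto
  qed (auto simp: Kst_dist_def)
qed

text \<open>Two distinct pendant vertices have no common neighbour.\<close>
lemma Kst_dist_le_walk:
  assumes "t \<le> s" and "(u, v) \<in> {(x, y). Kst_adj s t x y} ^^ k"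
  shows "Kst_dist s t u v \<le> k"
proof (rule ccontr)
  assume short: "\<not> ?thesis"
  moreover have "Kst_dist s t u v \<le> 3" by (simp add: Kst_dist_def)
  ultimately consider "k = 0" | "k = 1" | "k = 2" "Kst_dist s t u v = 3" by linarith
  then show False
  proof cases
    case 3
    then obtain w where "Kst_adj s t u w" "Kst_adj s t w v" using assms(2) by (auto simp: relpow_2_iff)
    with 3 assms(1) show False by (auto simp: Kst_dist_def Kst_adj_def split: if_splits)
  qed (use assms short in \<open>auto simp: Kst_dist_def split: if_splits\<close>)
qed

lemma graph_dist_Kst_adj:
  assumes "t \<le> s" "u < s + t" "v < s + t"
  shows "graph_dist (Kst_adj s t) u v = Kst_dist s t u v"
  unfolding graph_dist_def using Kst_dist_walk[OF assms] Kst_dist_le_walk[OF assms(1)]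
  by (intro Least_equality) auto

lemma det_2x2:
  assumes A: "(A :: 'a :: comm_ring_1 mat) \<in> carrier_mat 2 2"
  shows "det A = A $$ (0,0) * A $$ (1,1) - A $$ (1,0) * A $$ (0,1)"
proof -
  have "det A = (\<Sum>i<2. A $$ (i,0) * cofactor A i 0)"
    by (rule laplace_expansion_column[OF A], simp)
  also have "\<dots> = A $$ (0,0) * cofactor A 0 0 + A $$ (1,0) * cofactor A 1 0"
    by (simp add: numeral_2_eq_2)
  also have "cofactor A 0 0 = A $$ (1,1)"
    unfolding cofactor_def using A
    by (subst det_single) (auto simp: mat_delete_def mat_delete_carrier)
  also have "cofactor A 1 0 = - A $$ (0,1)"
    unfolding cofactor_def using A
    by (subst det_single) (auto simp: mat_delete_def mat_delete_carrier)
  finally show ?thesis by (simp add: algebra_simps)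
qed

lemma det_3x3:
  assumes A: "(A :: 'a :: comm_ring_1 mat) \<in> carrier_mat 3 3"
  shows "det A = A $$ (0,0) * (A $$ (1,1) * A $$ (2,2) - A $$ (2,1) * A $$ (1,2))
     - A $$ (1,0) * (A $$ (0,1) * A $$ (2,2) - A $$ (2,1) * A $$ (0,2))
     + A $$ (2,0) * (A $$ (0,1) * A $$ (1,2) - A $$ (1,1) * A $$ (0,2))"
proof -
  have "det A = (\<Sum>i<3. A $$ (i,0) * cofactor A i 0)"
    by (rule laplace_expansion_column[OF A], simp)
  also have "\<dots> = A $$ (0,0) * cofactor A 0 0 + A $$ (1,0) * cofactor A 1 0 + A $$ (2,0) * cofactor A 2 0"
    by (simp add: eval_nat_numeral)
  also have "cofactor A 0 0 = A $$ (1,1) * A $$ (2,2) - A $$ (2,1) * A $$ (1,2)"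
    unfolding cofactor_def using A
    by (subst det_2x2) (auto simp: mat_delete_def mat_delete_carrier eval_nat_numeral)
  also have "cofactor A 1 0 = - (A $$ (0,1) * A $$ (2,2) - A $$ (2,1) * A $$ (0,2))"
    unfolding cofactor_def using A
    by (subst det_2x2) (auto simp: mat_delete_def mat_delete_carrier eval_nat_numeral)
  also have "cofactor A 2 0 = A $$ (0,1) * A $$ (1,2) - A $$ (1,1) * A $$ (0,2)"
    unfolding cofactor_def using A
    by (subst det_2x2) (auto simp: mat_delete_def mat_delete_carrier eval_nat_numeral)
  finally show ?thesis by (simp add: algebra_simps)
qed

lemma char_poly_four_block_mat_lower_left_zero:
  fixes A1 :: "'a :: idom mat"
  assumes A1: "A1 \<in> carrier_mat n n" and A2: "A2 \<in> carrier_mat n k" and A3: "A3 \<in> carrier_mat k k"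
  shows "char_poly (four_block_mat A1 A2 (0\<^sub>m k n) A3) = char_poly A1 * char_poly A3"
proof -
  have "char_poly_matrix (four_block_mat A1 A2 (0\<^sub>m k n) A3)
      = four_block_mat (char_poly_matrix A1) (map_mat (\<lambda>a. [:- a:]) A2) (0\<^sub>m k n) (char_poly_matrix A3)"
    by (rule eq_matI) (use A1 A2 A3 in \<open>auto simp: char_poly_matrix_def\<close>)
  then show ?thesis
    unfolding char_poly_def using A1 A2 A3
    by (simp add: det_four_block_mat_lower_left_zero[where n = n and m = k])
qed

lemma monic_linear_poly_eq:
  fixes q :: "'a :: comm_ring_1 poly"
  assumes "degree q = 1" "coeff q 1 = 1"
  shows "q = [:coeff q 0, 1:]"
  using assms by (auto simp: poly_eq_iff coeff_pCons coeff_eq_0 split: nat.split)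

lemma monic_cubic_split_around:
  fixes q :: "real poly"
  assumes dq: "degree q = 3" and lq: "coeff q 3 = 1"
    and qr: "poly q r < 0" and wr: "w < r" and qw: "poly q w > 0"
  obtains x y z where "r < x" "y < r" "z < r" "q = [:-x,1:] * [:-y,1:] * [:-z,1:]"
proof -
  have "lead_coeff q > 0" using dq lq by simp
  from poly_pinfty_gt_lc[OF this] obtain N where N: "\<And>v. v \<ge> N \<Longrightarrow> poly q v \<ge> lead_coeff q"
    by blast
  define b where "b = max N (r + 1)"
  have "poly q b > 0" using N[of b] \<open>lead_coeff q > 0\<close> unfolding b_def by fastforce
  moreover have "r < b" unfolding b_def by simp
  ultimately obtain x where x: "r < x" "poly q x = 0" using poly_IVT_pos[OF _ qr] by blast
  then obtain q2 where q2: "q = [:-x,1:] * q2" using poly_eq_0_iff_dvd by (metis dvdE)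
  have q20: "q2 \<noteq> 0" using q2 dq by auto
  have dq2: "degree q2 = 2" using dq q20 unfolding q2 by (subst (asm) degree_mult_eq) auto
  have lq2: "coeff q2 2 = 1" using lq dq dq2 lead_coeff_mult[of "[:-x,1:]" q2] unfolding q2 by simp
  have "poly q r = (r - x) * poly q2 r" "poly q w = (w - x) * poly q2 w"
    unfolding q2 by (simp_all add: algebra_simps)
  then have q2r: "poly q2 r > 0" and q2w: "poly q2 w < 0"
    using qr qw x(1) wr by (simp_all add: mult_less_0_iff zero_less_mult_iff)
  obtain y where y: "y < r" "poly q2 y = 0" using poly_IVT_pos[OF wr q2w q2r] by blast
  then obtain q3 where q3: "q2 = [:-y,1:] * q3" using poly_eq_0_iff_dvd by (metis dvdE)
  have q30: "q3 \<noteq> 0" using q3 q20 by auto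
  have dq3: "degree q3 = 1" using dq2 q30 unfolding q3 by (subst (asm) degree_mult_eq) auto
  have lq3: "coeff q3 1 = 1" using lq2 dq2 dq3 lead_coeff_mult[of "[:-y,1:]" q3] unfolding q3 by simp
  define z where "z = - coeff q3 0"
  have q3e: "q3 = [:-z, 1:]" using monic_linear_poly_eq[OF dq3 lq3] unfolding z_def by simp
  have "poly q2 r = (r - y) * poly q3 r" unfolding q3 by (simp add: algebra_simps)
  then have "z < r" using q2r y(1) q3e by (simp add: zero_less_mult_iff)
  moreover have "q = [:-x,1:] * [:-y,1:] * [:-z,1:]" unfolding q2 q3 q3e by (simp only: mult.assoc)
  ultimately show thesis using that x(1) y(1) by blast
qed

lemma rev_sorted_list_of_multiset_nth_1:
  fixes M :: "'a :: linorder multiset"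
  assumes "\<forall>a\<in>#M. a \<le> r" "r < x"
  shows "rev (sorted_list_of_multiset (add_mset x (add_mset r M))) ! 1 = r"
proof -
  define ys where "ys = sorted_list_of_multiset M"
  have "sorted (ys @ [r, x])" using assms unfolding ys_def by (auto simp: sorted_append)
  moreover have "mset (ys @ [r, x]) = add_mset x (add_mset r M)" unfolding ys_def by simp
  ultimately have "sorted_list_of_multiset (add_mset x (add_mset r M)) = ys @ [r, x]"
    by (metis sorted_list_of_multiset_mset sorted_sort_id)
  then show ?thesis by simp
qed

lemma sum_mult_of_bool_eq:
  fixes f :: "nat \<Rightarrow> 'a :: semiring_1"
  assumes "a < n"
  shows "(\<Sum>i\<in>{0..<n}. f i * of_bool (i = a)) = f a"
  using assms by (simp add: sum.delta' of_bool_def if_distrib[where f = "\<lambda>c. _ * c"] cong: if_cong)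

lemma sum_mult_of_bool_diff:
  fixes f :: "nat \<Rightarrow> 'a :: ring_1"
  assumes "a < n" "b < n"
  shows "(\<Sum>i\<in>{0..<n}. f i * (of_bool (i = a) - of_bool (i = b))) = f a - f b"
  using sum_mult_of_bool_eq[OF assms(1), of f] sum_mult_of_bool_eq[OF assms(2), of f]
  by (simp add: right_diff_distrib sum_subtractf)

section \<open>A block triangular form of the distance matrix\<close>

definition \<mu> :: real where "\<mu> = sqrt 2 - 2"
definition \<kappa> :: real where "\<kappa> = 1 - sqrt 2"

lemma sqrt2_bounds: "1.41 < sqrt 2" "sqrt 2 < 1.42"
  by (rule real_less_rsqrt, simp add: power2_eq_square)
    (rule real_less_lsqrt, simp_all add: power2_eq_square)

text \<open>Coordinates for \<open>s = p + m + 2\<close>, \<open>t = p + 1\<close>: the clique vertices \<open>0..p\<close> carry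
  pendants, the clique vertices \<open>p + 1..p + m + 1\<close> do not, and \<open>p + m + 2 + i\<close> is the
  pendant of \<open>i\<close>.\<close>
definition dist_pm :: "nat \<Rightarrow> nat \<Rightarrow> nat \<Rightarrow> nat \<Rightarrow> nat" where
  "dist_pm p m u v = (if u = v then 0 else if u \<le> p+1+m \<and> v \<le> p+1+m then 1
    else if u \<le> p+1+m then (if v = p+m+2+u then 1 else 2)
    else if v \<le> p+1+m then (if u = p+m+2+v then 1 else 2) else 3)"

definition D_mat :: "nat \<Rightarrow> nat \<Rightarrow> real mat" where
  "D_mat p m = dist_matrix (2*p+m+3) (Kst_adj (p+m+2) (p+1))"

lemma D_mat_carrier: "D_mat p m \<in> carrier_mat (2*p+m+3) (2*p+m+3)"
  by (simp add: D_mat_def dist_matrix_def)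

lemma D_mat_entry:
  assumes "u < 2*p+m+3" "v < 2*p+m+3"
  shows "D_mat p m $$ (u, v) = real (dist_pm p m u v)"
proof -
  have "graph_dist (Kst_adj (p+m+2) (p+1)) u v = dist_pm p m u v"
    using assms by (subst graph_dist_Kst_adj) (auto simp: Kst_dist_def dist_pm_def Kst_adj_def)
  then show ?thesis using assms by (simp add: D_mat_def dist_matrix_def)
qed

text \<open>The columns: \<open>p\<close> eigenvectors for \<open>\<mu>\<close>, whose pendant part has coefficient \<open>\<kappa>\<close>
  (the eigenvector of \<open>[[-1, -1], [-1, -3]]\<close> for \<open>\<mu>\<close> is \<open>(1, \<kappa>)\<close>), \<open>p\<close> differences of
  pendants, \<open>m\<close> eigenvectors for \<open>-1\<close>, and the three class representatives. The last three
  rows of the inverse \<open>basis_Q\<close> are the class indicators.\<close>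
definition basis_P :: "nat \<Rightarrow> nat \<Rightarrow> nat \<Rightarrow> nat \<Rightarrow> real" where
  "basis_P p m v j =
    (if j < p then of_bool (v = j) - of_bool (v = p)
                   + \<kappa> * (of_bool (v = p+m+2+j) - of_bool (v = 2*p+m+2))
     else if j < 2*p then of_bool (v = p+m+2+(j-p)) - of_bool (v = 2*p+m+2)
     else if j < 2*p+m then of_bool (v = p+1+(j-2*p)) - of_bool (v = p+1+m)
     else if j = 2*p+m then of_bool (v = p)
     else if j = 2*p+m+1 then of_bool (v = p+1+m)
     else of_bool (v = 2*p+m+2))"

definition basis_Q :: "nat \<Rightarrow> nat \<Rightarrow> nat \<Rightarrow> nat \<Rightarrow> real" where
  "basis_Q p m j v =
    (if j < p then of_bool (v = j)
     else if j < 2*p then of_bool (v = p+m+2+(j-p)) - \<kappa> * of_bool (v = j-p)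
     else if j < 2*p+m then of_bool (v = p+1+(j-2*p))
     else if j = 2*p+m then of_bool (v \<le> p)
     else if j = 2*p+m+1 then of_bool (p < v \<and> v \<le> p+1+m)
     else of_bool (p+1+m < v))"

definition P_mat :: "nat \<Rightarrow> nat \<Rightarrow> real mat" where
  "P_mat p m = mat (2*p+m+3) (2*p+m+3) (\<lambda>(i,j). basis_P p m i j)"

definition Q_mat :: "nat \<Rightarrow> nat \<Rightarrow> real mat" where
  "Q_mat p m = mat (2*p+m+3) (2*p+m+3) (\<lambda>(i,j). basis_Q p m i j)"

definition T_mat :: "nat \<Rightarrow> nat \<Rightarrow> real mat" where
  "T_mat p m = Q_mat p m * (D_mat p m * P_mat p m)"

lemma index_cases:
  fixes p m :: nat
  assumes "j < 2*p+m+3"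
  obtains (W) i where "i < p" "j = i" | (V) i where "i < p" "j = p + i"
   | (G) i where "i < m" "j = 2*p + i"
   | (LA) "j = 2*p+m" | (LB) "j = 2*p+m+1" | (LP) "j = 2*p+m+2"
proof -
  consider "j < p" | "p \<le> j" "j < 2*p" | "2*p \<le> j" "j < 2*p+m"
    | "j = 2*p+m" | "j = 2*p+m+1" | "j = 2*p+m+2"
    using assms by linarith
  then show ?thesis
  proof cases
    case 1 then show ?thesis using W by blast
  next
    case 2 then show ?thesis using V[of "j - p"] by auto
  next
    case 3 then show ?thesis using G[of "j - 2*p"] by auto
  qed (use LA LB LP in auto)
qed

lemma vertex_cases:
  fixes p m :: nat
  assumes "v < 2*p+m+3"
  obtains (A) i where "i < p" "v = i" | (LA) "v = p" | (B) i where "i < m" "v = p + 1 + i"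
   | (LB) "v = p+1+m" | (P) i where "i < p" "v = p + m + 2 + i" | (LP) "v = 2*p+m+2"
proof -
  consider "v < p" | "v = p" | "p+1 \<le> v" "v < p+1+m" | "v = p+1+m"
    | "p+m+2 \<le> v" "v < 2*p+m+2" | "v = 2*p+m+2"
    using assms by linarith
  then show ?thesis
  proof cases
    case 1 then show ?thesis using A by blast
  next
    case 3 then show ?thesis using B[of "v - (p+1)"] by auto
  next
    case 5 then show ?thesis using P[of "v - (p+m+2)"] by auto
  qed (use LA LB LP in auto)
qed

lemma sum_vertex_classes:
  fixes g :: "nat \<Rightarrow> 'a::comm_monoid_add" and p m :: nat
  shows "(\<Sum>v\<in>{0..<2*p+m+3}. g v) = (\<Sum>i\<in>{0..<p}. g i) + g p + (\<Sum>i\<in>{0..<m}. g (p+1+i))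
     + g (p+1+m) + (\<Sum>i\<in>{0..<p}. g (p+m+2+i)) + g (2*p+m+2)"
proof -
  have shift: "(\<Sum>i\<in>{0..<b}. g (a+i)) = (\<Sum>v\<in>{a..<a+b}. g v)" for a b
    by (rule sym, subst sum.atLeastLessThan_shift_0, simp add: comp_def)
  have split: "(\<Sum>v\<in>{a..<c}. g v) = (\<Sum>v\<in>{a..<b}. g v) + (\<Sum>v\<in>{b..<c}. g v)"
    if "a \<le> b" "b \<le> c" for a b c
    using that by (simp add: sum.atLeastLessThan_concat)
  define N where "N = 2*p+m+3"
  have "N = p+1+m+1+p+1" by (simp add: N_def)
  then have "(\<Sum>v\<in>{0..<2*p+m+3}. g v) = (\<Sum>v\<in>{0..<p}. g v) + (\<Sum>v\<in>{p..<p+1}. g v)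
      + (\<Sum>v\<in>{p+1..<p+1+m}. g v) + (\<Sum>v\<in>{p+1+m..<p+1+m+1}. g v)
      + (\<Sum>v\<in>{p+1+m+1..<p+1+m+1+p}. g v) + (\<Sum>v\<in>{p+1+m+1+p..<p+1+m+1+p+1}. g v)"
    unfolding N_def[symmetric]
    using split[of 0 p N] split[of p "p+1" N] split[of "p+1" "p+1+m" N]
      split[of "p+1+m" "p+1+m+1" N] split[of "p+1+m+1" "p+1+m+1+p" N]
    by (simp add: add.assoc)
  also have "\<dots> = (\<Sum>i\<in>{0..<p}. g i) + g p + (\<Sum>i\<in>{0..<m}. g (p+1+i)) + g (p+1+m)
      + (\<Sum>i\<in>{0..<p}. g (p+m+2+i)) + g (2*p+m+2)"
    unfolding shift[symmetric] by (simp add: mult_2 add_ac)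
  finally show ?thesis .
qed

lemma sum_mult_basis_P:
  fixes p m :: nat
  assumes j: "j < 2*p+m+3"
  shows "(\<Sum>v\<in>{0..<2*p+m+3}. f v * basis_P p m v j) =
    (if j < p then f j - f p + \<kappa> * (f (p+m+2+j) - f (2*p+m+2))
     else if j < 2*p then f (p+m+2+(j-p)) - f (2*p+m+2)
     else if j < 2*p+m then f (p+1+(j-2*p)) - f (p+m+1)
     else if j = 2*p+m then f p
     else if j = 2*p+m+1 then f (p+m+1)
     else f (2*p+m+2))"
  using j
proof (cases rule: index_cases)
  case (W i)
  have "(\<Sum>v\<in>{0..<2*p+m+3}. f v * basis_P p m v j)
      = (\<Sum>v\<in>{0..<2*p+m+3}. f v * (of_bool (v = i) - of_bool (v = p)))
        + \<kappa> * (\<Sum>v\<in>{0..<2*p+m+3}. f v * (of_bool (v = p+m+2+i) - of_bool (v = 2*p+m+2)))"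
    unfolding sum_distrib_left sum.distrib[symmetric]
    by (rule sum.cong) (use W in \<open>auto simp: basis_P_def algebra_simps\<close>)
  with W show ?thesis by (simp add: sum_mult_of_bool_diff)
qed (auto simp: basis_P_def sum_mult_of_bool_eq sum_mult_of_bool_diff)

lemma basis_Q_basis_P:
  fixes p m :: nat
  assumes j: "j < 2*p+m+3" and k: "k < 2*p+m+3"
  shows "(\<Sum>v\<in>{0..<2*p+m+3}. basis_Q p m j v * basis_P p m v k) = of_bool (j = k)"
  unfolding sum_mult_basis_P[OF k] using k
  by (cases rule: index_cases; use j in \<open>cases rule: index_cases\<close>; simp add: basis_Q_def)

lemma D_basis_P:
  fixes p m :: nat
  assumes v: "v < 2*p+m+3" and k: "k < 2*p+m"
  shows "(\<Sum>u\<in>{0..<2*p+m+3}. real (dist_pm p m v u) * basis_P p m u k) =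
    (if k < p then \<mu> * basis_P p m v k
     else if k < 2*p then - basis_P p m v (k-p) + (\<kappa> - 3) * basis_P p m v k
     else - basis_P p m v k)"
proof -
  have k3: "k < 2*p+m+3" using k by simp
  show ?thesis unfolding sum_mult_basis_P[OF k3] using k3 k
    by (cases rule: index_cases; use v in \<open>cases rule: vertex_cases\<close>;
        simp add: dist_pm_def basis_P_def \<mu>_def \<kappa>_def algebra_simps)
qed

lemma P_mat_carrier: "P_mat p m \<in> carrier_mat (2*p+m+3) (2*p+m+3)"
  and Q_mat_carrier: "Q_mat p m \<in> carrier_mat (2*p+m+3) (2*p+m+3)"
  and T_mat_carrier: "T_mat p m \<in> carrier_mat (2*p+m+3) (2*p+m+3)"
  by (auto simp: P_mat_def Q_mat_def T_mat_def D_mat_def dist_matrix_def)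

lemma Q_mat_mult_P_mat: "Q_mat p m * P_mat p m = 1\<^sub>m (2*p+m+3)"
  by (rule eq_matI) (auto simp: Q_mat_def P_mat_def scalar_prod_def basis_Q_basis_P)

lemma P_mat_mult_Q_mat: "P_mat p m * Q_mat p m = 1\<^sub>m (2*p+m+3)"
  using mat_mult_left_right_inverse[OF Q_mat_carrier P_mat_carrier Q_mat_mult_P_mat] .

lemma similar_D_mat_T_mat: "similar_mat (D_mat p m) (T_mat p m)"
proof (rule similar_matI[of _ _ "P_mat p m" "Q_mat p m" "2*p+m+3"])
  let ?n = "2*p+m+3"
  note carriers = P_mat_carrier[of p m] Q_mat_carrier[of p m] D_mat_carrier[of p m]
  show "{D_mat p m, T_mat p m, P_mat p m, Q_mat p m} \<subseteq> carrier_mat ?n ?n"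
    using carriers T_mat_carrier by auto
  have "P_mat p m * T_mat p m * Q_mat p m
      = (P_mat p m * Q_mat p m) * (D_mat p m * P_mat p m) * Q_mat p m"
    using carriers by (simp add: T_mat_def assoc_mult_mat[of _ ?n ?n _ ?n _ ?n])
  also have "\<dots> = D_mat p m * (P_mat p m * Q_mat p m)"
    using carriers by (simp add: P_mat_mult_Q_mat assoc_mult_mat[of _ ?n ?n _ ?n _ ?n])
  finally show "D_mat p m = P_mat p m * T_mat p m * Q_mat p m"
    using carriers by (simp add: P_mat_mult_Q_mat)
qed (simp_all add: P_mat_mult_Q_mat Q_mat_mult_P_mat)

lemma T_mat_entry:
  assumes "j < 2*p+m+3" "k < 2*p+m+3"
  shows "T_mat p m $$ (j, k) = (\<Sum>v\<in>{0..<2*p+m+3}. basis_Q p m j v *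
    (\<Sum>u\<in>{0..<2*p+m+3}. real (dist_pm p m v u) * basis_P p m u k))"
  using assms
  by (auto simp: T_mat_def Q_mat_def P_mat_def scalar_prod_def D_mat_carrier[THEN carrier_matD(1)]
      D_mat_carrier[THEN carrier_matD(2)] D_mat_entry intro!: sum.cong)

lemma T_mat_entry_left:
  assumes j: "j < 2*p+m+3" and k: "k < 2*p+m"
  shows "T_mat p m $$ (j, k) =
    (if k < p then \<mu> * of_bool (j = k)
     else if k < 2*p then (\<kappa> - 3) * of_bool (j = k) - of_bool (j = k - p)
     else - of_bool (j = k))"
proof -
  have k3: "k < 2*p+m+3" and kp3: "k - p < 2*p+m+3" using k by simp_all
  let ?QP = "\<lambda>l. \<Sum>v\<in>{0..<2*p+m+3}. basis_Q p m j v * basis_P p m v l"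
  have "T_mat p m $$ (j, k) = (\<Sum>v\<in>{0..<2*p+m+3}. basis_Q p m j v *
    (if k < p then \<mu> * basis_P p m v k
     else if k < 2*p then - basis_P p m v (k-p) + (\<kappa> - 3) * basis_P p m v k
     else - basis_P p m v k))"
    unfolding T_mat_entry[OF j k3] by (intro sum.cong) (simp_all add: D_basis_P k)
  also have "\<dots> =
    (if k < p then \<mu> * ?QP k else if k < 2*p then (\<kappa> - 3) * ?QP k - ?QP (k - p) else - ?QP k)"
    by (cases "k < p"; cases "k < 2*p")
      (simp_all add: sum_distrib_left sum_negf sum_subtractf sum.distrib ring_distribs
        mult.left_commute)
  finally show ?thesis by (simp add: basis_Q_basis_P[OF j k3] basis_Q_basis_P[OF j kp3])
qed

definition T_diag :: "nat \<Rightarrow> nat \<Rightarrow> real" where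
  "T_diag p i = (if i < p then \<mu> else if i < 2*p then \<kappa> - 3 else -1)"

lemma T_mat_below_diag:
  assumes "i < 2*p+m+3" "j < 2*p+m" "j < i"
  shows "T_mat p m $$ (i, j) = 0"
  using assms by (auto simp: T_mat_entry_left)

lemma T_mat_diag:
  assumes "1 \<le> p" "j < 2*p+m"
  shows "T_mat p m $$ (j, j) = T_diag p j"
  using assms by (auto simp: T_mat_entry_left T_diag_def)

text \<open>Entry \<open>(a, b)\<close> sums the distances from the representative of class \<open>b\<close> to the vertices
  of class \<open>a\<close>, the classes being the clique vertices with pendants, those without, and the
  pendants.\<close>
definition quotient_mat :: "nat \<Rightarrow> nat \<Rightarrow> real mat" where
  "quotient_mat p m = mat_of_rows_list 3
    [[real p, real p + 1, 2 * real p + 1],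
     [real m + 1, real m, 2 * real m + 2],
     [2 * real p + 1, 2 * real p + 2, 3 * real p]]"

lemma quotient_mat_carrier: "quotient_mat p m \<in> carrier_mat 3 3"
  by (intro carrier_matI) (simp_all add: quotient_mat_def mat_of_rows_list_def)

lemma T_mat_entry_quotient:
  assumes a: "a < 3" and b: "b < 3"
  shows "T_mat p m $$ (2*p+m+a, 2*p+m+b) = quotient_mat p m $$ (a, b)"
proof -
  have j: "2*p+m+a < 2*p+m+3" and k: "2*p+m+b < 2*p+m+3" using a b by auto
  have "T_mat p m $$ (2*p+m+a, 2*p+m+b) = (\<Sum>v\<in>{0..<2*p+m+3}. basis_Q p m (2*p+m+a) v *
     real (dist_pm p m v (if b = 0 then p else if b = 1 then p+m+1 else 2*p+m+2)))"
    unfolding T_mat_entry[OF j k] by (intro sum.cong) (use b in \<open>auto simp: sum_mult_basis_P\<close>)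
  also have "\<dots> = quotient_mat p m $$ (a, b)"
  proof -
    have "a = 0 \<or> a = 1 \<or> a = 2" "b = 0 \<or> b = 1 \<or> b = 2" using a b by auto
    then show ?thesis unfolding sum_vertex_classes
      by (elim disjE; simp add: basis_Q_def dist_pm_def quotient_mat_def mat_of_rows_list_def
          of_bool_def)
  qed
  finally show ?thesis .
qed

lemma char_poly_D_mat:
  assumes "1 \<le> p"
  shows "char_poly (D_mat p m)
    = (\<Prod>i\<in>{0..<2*p+m}. [:- T_diag p i, 1:]) * char_poly (quotient_mat p m)"
proof -
  define N where "N = 2*p+m"
  define T1 where "T1 = mat N N (\<lambda>(i, j). T_mat p m $$ (i, j))"
  define T2 where "T2 = mat N 3 (\<lambda>(i, j). T_mat p m $$ (i, j + N))"
  have T1: "T1 \<in> carrier_mat N N" and T2: "T2 \<in> carrier_mat N 3"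
    by (simp_all add: T1_def T2_def)
  have "T_mat p m = four_block_mat T1 T2 (0\<^sub>m 3 N) (quotient_mat p m)"
  proof (rule eq_matI)
    fix i j assume "i < dim_row (four_block_mat T1 T2 (0\<^sub>m 3 N) (quotient_mat p m))"
      "j < dim_col (four_block_mat T1 T2 (0\<^sub>m 3 N) (quotient_mat p m))"
    then have i: "i < N + 3" and j: "j < N + 3" using T1 quotient_mat_carrier[of p m] by auto
    consider "i < N" | "N \<le> i" "j < N" | "N \<le> i" "N \<le> j" by linarith
    then show "T_mat p m $$ (i, j) = four_block_mat T1 T2 (0\<^sub>m 3 N) (quotient_mat p m) $$ (i, j)"
    proof cases
      case 1 then show ?thesis
        using i j quotient_mat_carrier[of p m] by (cases "j < N") (auto simp: T1_def T2_def)
    next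
      case 2 then show ?thesis
        using i j T1 quotient_mat_carrier[of p m] by (simp add: T_mat_below_diag N_def)
    next
      case 3
      then have "T_mat p m $$ (i, j) = quotient_mat p m $$ (i - N, j - N)"
        using i j T_mat_entry_quotient[of "i - N" "j - N" p m] by (simp add: N_def)
      then show ?thesis using 3 i j T1 T2 quotient_mat_carrier[of p m] by simp
    qed
  qed (use T1 quotient_mat_carrier[of p m] T_mat_carrier[of p m] in \<open>auto simp: N_def\<close>)
  then have "char_poly (T_mat p m) = char_poly T1 * char_poly (quotient_mat p m)"
    using char_poly_four_block_mat_lower_left_zero[OF T1 T2 quotient_mat_carrier] by simp
  moreover have "char_poly T1 = (\<Prod>i\<in>{0..<N}. [:- T_diag p i, 1:])"
  proof -
    have "upper_triangular T1"
      unfolding upper_triangular_def using T1 by (auto simp: T1_def N_def T_mat_below_diag)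
    then have "char_poly T1 = (\<Prod>a\<leftarrow>diag_mat T1. [:- a, 1:])"
      by (rule char_poly_upper_triangular[OF T1])
    also have "diag_mat T1 = map (T_diag p) [0..<N]"
      using T1 assms by (auto simp: diag_mat_def T1_def N_def T_mat_diag)
    finally show ?thesis by (simp add: prod.distinct_set_conv_list[symmetric] comp_def)
  qed
  ultimately show ?thesis
    using char_poly_similar[OF similar_D_mat_T_mat] by (simp add: N_def)
qed

lemma poly_char_poly_quotient_mat:
  "poly (char_poly (quotient_mat p m)) x =
     x^3 + (5 - 4 * (real p + 1) - (real m + 1)) * x^2
   + (6 - 4 * (real m + 1) - 6 * (real p + 1) - (real p + 1) * (real m + 1) - (real p + 1)^2) * x
   + (2 - 2 * (real m + 1) - 2 * (real p + 1) - (real p + 1) * (real m + 1) - (real p + 1)^2)"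
  unfolding char_poly_def det_3x3[OF char_poly_matrix_closed[OF quotient_mat_carrier]]
  by (simp add: char_poly_matrix_def quotient_mat_def mat_of_rows_list_def algebra_simps
      power2_eq_square power3_eq_cube)

lemma poly_char_poly_quotient_mat_\<mu>_neg: "poly (char_poly (quotient_mat p m)) \<mu> < 0"
proof -
  define u where "u = real p + real m + 2"
  have "poly (char_poly (quotient_mat p m)) \<mu> = (real p + 1) * (u - 14 - sqrt 2 * (u - 10))"
    unfolding poly_char_poly_quotient_mat \<mu>_def u_def
    by (simp add: algebra_simps power2_eq_square power3_eq_cube)
  moreover have "u - 14 - sqrt 2 * (u - 10) < 0"
  proof (cases "u \<ge> 10")
    case True
    then have "sqrt 2 * (u - 10) \<ge> 1 * (u - 10)"
      using sqrt2_bounds by (intro mult_right_mono) auto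
    then show ?thesis by simp
  next
    case False
    then have "sqrt 2 * (u - 10) > 1.42 * (u - 10)"
      using sqrt2_bounds by (intro mult_strict_right_mono_neg) auto
    then show ?thesis using u_def by simp
  qed
  ultimately show ?thesis by (simp add: mult_pos_neg)
qed

lemma poly_char_poly_quotient_mat_minus_1: "poly (char_poly (quotient_mat p m)) (-1) = real m + 1"
  unfolding poly_char_poly_quotient_mat by (simp add: algebra_simps power2_eq_square power3_eq_cube)

lemma in_sum_mset_singletons: "finite A \<Longrightarrow> a \<in># (\<Sum>i\<in>A. {#f i#}) \<Longrightarrow> \<exists>i\<in>A. a = f i"
  by (induction A rule: finite_induct) auto

lemma eigval_D_mat_2:
  assumes p: "1 \<le> p"
  shows "eigval (D_mat p m) 2 = \<mu>"
proof -
  let ?q = "char_poly (quotient_mat p m)"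
  have "degree ?q = 3" "coeff ?q 3 = 1"
    using degree_monic_char_poly[OF quotient_mat_carrier] by auto
  moreover have "-1 < \<mu>" using sqrt2_bounds unfolding \<mu>_def by simp
  moreover have "poly ?q (-1) > 0" by (simp add: poly_char_poly_quotient_mat_minus_1)
  ultimately obtain x y z where xyz: "\<mu> < x" "y < \<mu>" "z < \<mu>"
    and cubic: "?q = [:-x,1:] * [:-y,1:] * [:-z,1:]"
    using monic_cubic_split_around poly_char_poly_quotient_mat_\<mu>_neg by metis
  define M where "M = (\<Sum>i\<in>{1..<2*p+m}. {#T_diag p i#}) + {#y, z#}"
  have "proots (char_poly (D_mat p m)) = (\<Sum>i\<in>{0..<2*p+m}. {#T_diag p i#}) + {#x, y, z#}"
    unfolding char_poly_D_mat[OF p] cubic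
    by (subst proots_mult, simp, simp, subst proots_prod, simp, subst proots_mult, simp, simp,
        subst proots_mult, simp, simp, simp)
  also have "(\<Sum>i\<in>{0..<2*p+m}. {#T_diag p i#}) = {#\<mu>#} + (\<Sum>i\<in>{1..<2*p+m}. {#T_diag p i#})"
    using p by (subst sum.atLeast_Suc_lessThan) (auto simp: T_diag_def)
  finally have roots: "proots (char_poly (D_mat p m)) = add_mset x (add_mset \<mu> M)"
    unfolding M_def by simp
  have "T_diag p i \<le> \<mu>" for i
    using sqrt2_bounds unfolding T_diag_def \<mu>_def \<kappa>_def by auto
  then have "\<forall>a\<in>#M. a \<le> \<mu>" unfolding M_def using xyz
    by (auto dest!: in_sum_mset_singletons[rotated])
  then show ?thesis
    unfolding eigval_def roots using rev_sorted_list_of_multiset_nth_1 xyz(1) by simp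
qed

theorem corollary3p2:
  fixes s t n :: nat
  assumes "3 \<le> t + 1" and "t + 1 \<le> s" and "n = s + t"
  shows "eigval (dist_matrix n (Kst_adj s t)) 2 = sqrt 2 - 2"
proof -
  define p where "p = t - 1"
  define m where "m = s - t - 1"
  have "1 \<le> p" and "s = p+m+2" and "t = p+1" and "n = 2*p+m+3"
    using assms unfolding p_def m_def by auto
  then show ?thesis using eigval_D_mat_2 unfolding D_mat_def \<mu>_def by simp
qed

end
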